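(* Let $(\mathbb{X},A)$ be a quantum graph. Then the eigenspaces of $D_A$ and of $D^A$ are invariant under the action of $\operatorname{Qut}(\mathbb{X},A)$; that is, the orthogonal projections onto the eigenspaces of $D_A$ (and of $D^A$) are intertwiners of the fundamental representation $U$ of $\operatorname{Qut}(\mathbb{X},A)$, i.e. they commute with $U$.
   Context: A finite quantum set $\mathbb{X}$ is a finite-dimensional C*-algebra $C(\mathbb{X})$ with its unique tracial positive functional $\psi$ such that, for $\langle x,y\rangle=\psi(x^*y)$ on $\ell^2(\mathbb{X}):=C(\mathbb{X})$, the multiplication $m$ satisfies $mm^*=\mathrm{id}$; $\eta$ is the unit. A quantum graph is $(\mathbb{X},A)$ with $A\bullet A=A=\bar A$, where $A\bullet B=m(A\otimes B)m^*$ and $\bar Af=(A(f^* ))^*$. The degree operators are $D_A=m(A\eta\otimes I_{\ell^2(\mathbb{X})})$ and $D^A=m(A^*\eta\otimes I_{\ell^2(\mathbb{X})})$ (i.e. left multiplication by $A\eta$, resp. $A^*\eta$). $\operatorname{Qut}(\mathbb{X},A)$ is the compact matrix quantum group whose Hopf $*$-algebra is the universal $*$-algebra generated by the entries of a matrix $U$ (its fundamental representation, acting on $\ell^2(\mathbb{X})$) subject to $U$ unitary, $m(U\otimes U)=Um$, $U\eta=\eta$, $UA=AU$. An operator $T$ on $\ell^2(\mathbb{X})$ is an intertwiner of $U$ if $(T\otimes1)U=U(T\otimes1)$. *)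

theory Defs
  imports Complex_Main
begin

text \<open>
  By the structure theorem, a finite-dimensional
  C*-algebra is C(X) = M_{n_0} (+) ... (+) M_{n_{r-1}}; it is encoded by the list ns of block
  sizes.  An element of C(X) (or of C(X) tensor B for an algebra B) is a coefficient function
  on the index set qcar ns: (i,j,k) stands for the matrix unit e^(i)_{jk}.
  The tracial functional with m m^* = id is psi = sum_i n_i Tr_i.
\<close>

type_synonym qidx = "nat \<times> nat \<times> nat"

definition qcar :: "nat list \<Rightarrow> qidx set" where
  "qcar ns = {(i,j,k). i < length ns \<and> j < ns ! i \<and> k < ns ! i}"

definition nsz :: "nat list \<Rightarrow> qidx \<Rightarrow> nat" where
  "nsz ns p = ns ! fst p"

definition finite_quantum_set :: "nat list \<Rightarrow> bool" where
  "finite_quantum_set ns \<longleftrightarrow> (\<forall>n\<in>set ns. 0 < n)"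

text \<open>Multiplication in C(X) tensor R (blockwise matrix multiplication), R any ring.\<close>
definition qmult :: "nat list \<Rightarrow> (qidx \<Rightarrow> 'r::semiring_0) \<Rightarrow> (qidx \<Rightarrow> 'r) \<Rightarrow> qidx \<Rightarrow> 'r" where
  "qmult ns x y = (\<lambda>(i,j,k). if (i,j,k) \<in> qcar ns
       then (\<Sum>l<ns ! i. x (i,j,l) * y (i,l,k)) else 0)"

definition qunit :: "nat list \<Rightarrow> qidx \<Rightarrow> complex" where
  "qunit ns = (\<lambda>(i,j,k). if (i,j,k) \<in> qcar ns \<and> j = k then 1 else 0)"

definition qstar :: "nat list \<Rightarrow> (qidx \<Rightarrow> complex) \<Rightarrow> qidx \<Rightarrow> complex" where
  "qstar ns x = (\<lambda>(i,j,k). if (i,j,k) \<in> qcar ns then cnj (x (i,k,j)) else 0)"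

definition qpsi :: "nat list \<Rightarrow> (qidx \<Rightarrow> complex) \<Rightarrow> complex" where
  "qpsi ns x = (\<Sum>p\<in>qcar ns. if fst (snd p) = snd (snd p)
                   then of_nat (nsz ns p) * x p else 0)"

definition qinner :: "nat list \<Rightarrow> (qidx \<Rightarrow> complex) \<Rightarrow> (qidx \<Rightarrow> complex) \<Rightarrow> complex" where
  "qinner ns x y = qpsi ns (qmult ns (qstar ns x) y)"

definition qbasis :: "qidx \<Rightarrow> qidx \<Rightarrow> 'r::zero_neq_one" where
  "qbasis q = (\<lambda>p. if p = q then 1 else 0)"

text \<open>Operators on l^2(X) are given by their kernels K p q w.r.t. the basis e_q:
  T e_q = sum_p K p q e_p.  Only the values on qcar ns x qcar ns matter.\<close>

definition qapp :: "nat list \<Rightarrow> (qidx \<Rightarrow> qidx \<Rightarrow> complex) \<Rightarrow> (qidx \<Rightarrow> complex) \<Rightarrow> qidx \<Rightarrow> complex" where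
  "qapp ns K x = (\<lambda>p. if p \<in> qcar ns then (\<Sum>q\<in>qcar ns. K p q * x q) else 0)"

definition qop_eq :: "nat list \<Rightarrow> (qidx \<Rightarrow> qidx \<Rightarrow> 'r) \<Rightarrow> (qidx \<Rightarrow> qidx \<Rightarrow> 'r) \<Rightarrow> bool" where
  "qop_eq ns K L \<longleftrightarrow> (\<forall>p\<in>qcar ns. \<forall>q\<in>qcar ns. K p q = L p q)"

definition qcomp :: "nat list \<Rightarrow> (qidx \<Rightarrow> qidx \<Rightarrow> complex) \<Rightarrow> (qidx \<Rightarrow> qidx \<Rightarrow> complex) \<Rightarrow> qidx \<Rightarrow> qidx \<Rightarrow> complex" where
  "qcomp ns K L = (\<lambda>p r. \<Sum>q\<in>qcar ns. K p q * L q r)"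

text \<open>Hilbert space adjoint w.r.t. <x,y> = psi(x^* y) = sum_p n_p cnj(x p) y p.\<close>
definition qadj :: "nat list \<Rightarrow> (qidx \<Rightarrow> qidx \<Rightarrow> complex) \<Rightarrow> qidx \<Rightarrow> qidx \<Rightarrow> complex" where
  "qadj ns K = (\<lambda>p q. of_nat (nsz ns q) / of_nat (nsz ns p) * cnj (K q p))"

definition qcol :: "nat list \<Rightarrow> (qidx \<Rightarrow> qidx \<Rightarrow> 'r::zero) \<Rightarrow> qidx \<Rightarrow> qidx \<Rightarrow> 'r" where
  "qcol ns K q = (\<lambda>p. if p \<in> qcar ns then K p q else 0)"

text \<open>Schur product A \<bullet> B = m (A (x) B) m^*, where
  m^* z = sum_{q,r} <e_q e_r, z> / (n_q n_r) e_q (x) e_r is the adjoint of m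
  (the vectors e_q / sqrt n_q form an orthonormal basis).\<close>
definition qschur :: "nat list \<Rightarrow> (qidx \<Rightarrow> qidx \<Rightarrow> complex) \<Rightarrow> (qidx \<Rightarrow> qidx \<Rightarrow> complex) \<Rightarrow> qidx \<Rightarrow> qidx \<Rightarrow> complex" where
  "qschur ns A B = (\<lambda>p s. \<Sum>q\<in>qcar ns. \<Sum>r\<in>qcar ns.
      qinner ns (qmult ns (qbasis q) (qbasis r)) (qbasis s)
        / (of_nat (nsz ns q) * of_nat (nsz ns r))
      * qmult ns (qcol ns A q) (qcol ns B r) p)"

definition qbar :: "nat list \<Rightarrow> (qidx \<Rightarrow> qidx \<Rightarrow> complex) \<Rightarrow> qidx \<Rightarrow> qidx \<Rightarrow> complex" where
  "qbar ns A = (\<lambda>p s. qstar ns (qapp ns A (qstar ns (qbasis s))) p)"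

definition quantum_graph :: "nat list \<Rightarrow> (qidx \<Rightarrow> qidx \<Rightarrow> complex) \<Rightarrow> bool" where
  "quantum_graph ns A \<longleftrightarrow> finite_quantum_set ns \<and>
     qop_eq ns (qschur ns A A) A \<and> qop_eq ns (qbar ns A) A"

definition degL :: "nat list \<Rightarrow> (qidx \<Rightarrow> qidx \<Rightarrow> complex) \<Rightarrow> qidx \<Rightarrow> qidx \<Rightarrow> complex" where
  "degL ns A = (\<lambda>p q. qmult ns (qapp ns A (qunit ns)) (qbasis q) p)"

definition degR :: "nat list \<Rightarrow> (qidx \<Rightarrow> qidx \<Rightarrow> complex) \<Rightarrow> qidx \<Rightarrow> qidx \<Rightarrow> complex" where
  "degR ns A = (\<lambda>p q. qmult ns (qapp ns (qadj ns A) (qunit ns)) (qbasis q) p)"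

definition eigenspace :: "nat list \<Rightarrow> (qidx \<Rightarrow> qidx \<Rightarrow> complex) \<Rightarrow> complex \<Rightarrow> (qidx \<Rightarrow> complex) set" where
  "eigenspace ns D lam = {x. (\<forall>p. p \<notin> qcar ns \<longrightarrow> x p = 0) \<and> qapp ns D x = (\<lambda>p. lam * x p)}"

definition is_orth_proj :: "nat list \<Rightarrow> (qidx \<Rightarrow> qidx \<Rightarrow> complex) \<Rightarrow> (qidx \<Rightarrow> complex) set \<Rightarrow> bool" where
  "is_orth_proj ns P S \<longleftrightarrow> qop_eq ns (qcomp ns P P) P \<and> qop_eq ns (qadj ns P) P
      \<and> range (qapp ns P) = S"

text \<open>Unital complex *-algebras: a ring 'b with a central unital ring homomorphism
  sc : complex \<Rightarrow> 'b (scalars act by c \<cdot> x = sc c * x) and a conjugate-linear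
  anti-multiplicative involution st.\<close>
definition star_algebra :: "(complex \<Rightarrow> 'b::ring_1) \<Rightarrow> ('b \<Rightarrow> 'b) \<Rightarrow> bool" where
  "star_algebra sc st \<longleftrightarrow>
     (\<forall>a b. sc (a + b) = sc a + sc b) \<and> (\<forall>a b. sc (a * b) = sc a * sc b) \<and> sc 1 = 1 \<and>
     (\<forall>a x. sc a * x = x * sc a) \<and>
     (\<forall>x y. st (x + y) = st x + st y) \<and> (\<forall>x y. st (x * y) = st y * st x) \<and>
     (\<forall>x. st (st x) = x) \<and> (\<forall>a x. st (sc a * x) = sc (cnj a) * st x)"

text \<open>U :: qidx \<Rightarrow> qidx \<Rightarrow> 'b is an element of B(l^2(X)) (x) B,
  U (e_q (x) 1) = sum_p e_p (x) U p q, satisfying the defining relations of Qut(X,A).\<close>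
definition qut_rel :: "nat list \<Rightarrow> (qidx \<Rightarrow> qidx \<Rightarrow> complex) \<Rightarrow> (complex \<Rightarrow> 'b::ring_1) \<Rightarrow> ('b \<Rightarrow> 'b)
     \<Rightarrow> (qidx \<Rightarrow> qidx \<Rightarrow> 'b) \<Rightarrow> bool" where
  "qut_rel ns A sc st U \<longleftrightarrow>
     (let Us = (\<lambda>p q. sc (of_nat (nsz ns q) / of_nat (nsz ns p)) * st (U q p)) in
       (\<forall>p\<in>qcar ns. \<forall>q\<in>qcar ns. (\<Sum>r\<in>qcar ns. U p r * Us r q) = (if p = q then 1 else 0)) \<and>
       (\<forall>p\<in>qcar ns. \<forall>q\<in>qcar ns. (\<Sum>r\<in>qcar ns. Us p r * U r q) = (if p = q then 1 else 0))) \<and>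
     (\<forall>q\<in>qcar ns. \<forall>r\<in>qcar ns. \<forall>p\<in>qcar ns.
        qmult ns (qcol ns U q) (qcol ns U r) p
          = (\<Sum>t\<in>qcar ns. U p t * sc (qmult ns (qbasis q) (qbasis r) t))) \<and>
     (\<forall>p\<in>qcar ns. (\<Sum>t\<in>qcar ns. U p t * sc (qunit ns t)) = sc (qunit ns p)) \<and>
     (\<forall>p\<in>qcar ns. \<forall>q\<in>qcar ns. (\<Sum>r\<in>qcar ns. U p r * sc (A r q)) = (\<Sum>r\<in>qcar ns. sc (A p r) * U r q))"

text \<open>(T (x) 1) U = U (T (x) 1).\<close>
definition qintertwines :: "nat list \<Rightarrow> (complex \<Rightarrow> 'b::ring_1) \<Rightarrow> (qidx \<Rightarrow> qidx \<Rightarrow> 'b)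
     \<Rightarrow> (qidx \<Rightarrow> qidx \<Rightarrow> complex) \<Rightarrow> bool" where
  "qintertwines ns sc U T \<longleftrightarrow>
     (\<forall>p\<in>qcar ns. \<forall>q\<in>qcar ns. (\<Sum>r\<in>qcar ns. sc (T p r) * U r q) = (\<Sum>r\<in>qcar ns. U p r * sc (T r q)))"

end

theory Submission
  imports Defs
begin

text \<open>
  Put N = D - \<lambda>. The relations of Qut(X,A) make U commute with D \<otimes> 1: U fixes \<eta> and commutes
  with A, hence fixes a = A \<eta>, and a multiplicative U that fixes a commutes with left multiplication
  by a. For D^A take a = A^* \<eta>; U commutes with A^* because U^* does (take adjoints in AU = UA)
  and U is unitary.

  Over \<complex>, ker N = range P gives N P = 0 and P - 1 = M N for some M. If V commutes with N,
  then N V P = V N P = 0, so (P - 1) V P = M N V P = 0, that is V P = P V P. Applying this to V = U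
  and to V = U^*, and taking adjoints in the second identity, gives P U = P U P = U P.
\<close>

section \<open>Matrices over a ring indexed by a finite set\<close>

definition mat_mult :: "'i set \<Rightarrow> ('i \<Rightarrow> 'i \<Rightarrow> 'b::semiring_0) \<Rightarrow> ('i \<Rightarrow> 'i \<Rightarrow> 'b) \<Rightarrow> 'i \<Rightarrow> 'i \<Rightarrow> 'b" where
  "mat_mult I X Y = (\<lambda>p q. \<Sum>r\<in>I. X p r * Y r q)"

definition mat_one :: "'i \<Rightarrow> 'i \<Rightarrow> 'b::semiring_1" where
  "mat_one = (\<lambda>p q. of_bool (p = q))"

definition mat_eq_on :: "'i set \<Rightarrow> ('i \<Rightarrow> 'i \<Rightarrow> 'b) \<Rightarrow> ('i \<Rightarrow> 'i \<Rightarrow> 'b) \<Rightarrow> bool" where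
  "mat_eq_on I X Y \<longleftrightarrow> (\<forall>p\<in>I. \<forall>q\<in>I. X p q = Y p q)"

definition mat_commute :: "'i set \<Rightarrow> ('i \<Rightarrow> 'i \<Rightarrow> 'b::semiring_0) \<Rightarrow> ('i \<Rightarrow> 'i \<Rightarrow> 'b) \<Rightarrow> bool" where
  "mat_commute I X Y \<longleftrightarrow> mat_eq_on I (mat_mult I X Y) (mat_mult I Y X)"

lemma mat_eq_on_refl [simp]: "mat_eq_on I X X"
  by (simp add: mat_eq_on_def)

lemma mat_eq_on_sym: "mat_eq_on I X Y \<Longrightarrow> mat_eq_on I Y X"
  by (simp add: mat_eq_on_def)

lemma mat_eq_on_trans [trans]: "mat_eq_on I X Y \<Longrightarrow> mat_eq_on I Y Z \<Longrightarrow> mat_eq_on I X Z"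
  by (simp add: mat_eq_on_def)

lemma mat_mult_assoc: "finite I \<Longrightarrow> mat_mult I (mat_mult I X Y) Z = mat_mult I X (mat_mult I Y Z)"
  unfolding mat_mult_def
  by (auto simp: sum_distrib_left sum_distrib_right mult.assoc intro!: sum.swap)

lemma mat_mult_cong:
  "mat_eq_on I X X' \<Longrightarrow> mat_eq_on I Y Y' \<Longrightarrow> mat_eq_on I (mat_mult I X Y) (mat_mult I X' Y')"
  unfolding mat_eq_on_def mat_mult_def by (auto intro!: sum.cong)

lemma sum_mat_one_left:
  fixes f :: "'i \<Rightarrow> 'b::semiring_1"
  shows "finite I \<Longrightarrow> p \<in> I \<Longrightarrow> (\<Sum>r\<in>I. mat_one p r * f r) = f p"
  by (simp add: mat_one_def Int_def Collect_conv_if)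

lemma sum_mat_one_right:
  fixes f :: "'i \<Rightarrow> 'b::semiring_1"
  shows "finite I \<Longrightarrow> q \<in> I \<Longrightarrow> (\<Sum>r\<in>I. f r * mat_one r q) = f q"
  by (simp add: mat_one_def Int_def Collect_conv_if)

lemma mat_mult_one_left_at: "finite I \<Longrightarrow> p \<in> I \<Longrightarrow> mat_mult I mat_one X p q = X p q"
  by (simp add: mat_mult_def sum_mat_one_left)

lemma mat_mult_one_right_at: "finite I \<Longrightarrow> q \<in> I \<Longrightarrow> mat_mult I X mat_one p q = X p q"
  by (simp add: mat_mult_def sum_mat_one_right)

lemma mat_mult_one_left: "finite I \<Longrightarrow> mat_eq_on I (mat_mult I mat_one X) X"
  by (simp add: mat_eq_on_def mat_mult_one_left_at)

lemma mat_mult_one_right: "finite I \<Longrightarrow> mat_eq_on I (mat_mult I X mat_one) X"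
  by (simp add: mat_eq_on_def mat_mult_one_right_at)

lemma mat_mult_zero_right [simp]: "mat_mult I X (\<lambda>_ _. 0) = (\<lambda>_ _. 0)"
  by (simp add: mat_mult_def)

lemma mat_commute_inverse:
  fixes X V W :: "'i \<Rightarrow> 'i \<Rightarrow> 'b::semiring_1"
  assumes I: "finite I" and VW: "mat_eq_on I (mat_mult I V W) mat_one"
    and WV: "mat_eq_on I (mat_mult I W V) mat_one" and XV: "mat_commute I X V"
  shows "mat_commute I X W"
proof -
  have "mat_eq_on I (mat_mult I X W) (mat_mult I (mat_mult I W V) (mat_mult I X W))"
    by (rule mat_eq_on_sym,
        rule mat_eq_on_trans[OF mat_mult_cong[OF WV mat_eq_on_refl] mat_mult_one_left[OF I]])
  also have "mat_mult I (mat_mult I W V) (mat_mult I X W)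
      = mat_mult I W (mat_mult I (mat_mult I V X) W)"
    by (simp add: mat_mult_assoc[OF I])
  also have "mat_eq_on I \<dots> (mat_mult I W (mat_mult I (mat_mult I X V) W))"
    using XV unfolding mat_commute_def
    by (rule mat_mult_cong[OF mat_eq_on_refl mat_mult_cong[OF mat_eq_on_sym mat_eq_on_refl]])
  also have "mat_mult I W (mat_mult I (mat_mult I X V) W)
      = mat_mult I W (mat_mult I X (mat_mult I V W))"
    by (simp add: mat_mult_assoc[OF I])
  also have "mat_eq_on I \<dots> (mat_mult I W X)"
    by (rule mat_mult_cong[OF mat_eq_on_refl
          mat_eq_on_trans[OF mat_mult_cong[OF mat_eq_on_refl VW] mat_mult_one_right[OF I]]])
  finally show ?thesis by (simp add: mat_commute_def)
qed

lemma mat_mult_sub_scalar_left: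
  fixes X Y :: "'i \<Rightarrow> 'i \<Rightarrow> 'b::ring_1"
  assumes "finite I" "p \<in> I"
  shows "mat_mult I (\<lambda>p q. X p q - c * mat_one p q) Y p q = mat_mult I X Y p q - c * Y p q"
proof -
  have "mat_mult I (\<lambda>p q. X p q - c * mat_one p q) Y p q
      = mat_mult I X Y p q - c * mat_mult I mat_one Y p q"
    by (simp add: mat_mult_def left_diff_distrib sum_subtractf sum_distrib_left mult.assoc)
  with assms show ?thesis by (simp add: mat_mult_one_left_at)
qed

lemma mat_mult_sub_scalar_right:
  fixes X Y :: "'i \<Rightarrow> 'i \<Rightarrow> 'b::ring_1"
  assumes "finite I" "q \<in> I"
  shows "mat_mult I Y (\<lambda>p q. X p q - c * mat_one p q) p q = mat_mult I Y X p q - Y p q * c"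
proof -
  have "c * mat_one r q = mat_one r q * c" for r
    by (simp add: mat_one_def)
  then have "mat_mult I Y (\<lambda>p q. X p q - c * mat_one p q) p q
      = mat_mult I Y X p q - mat_mult I Y mat_one p q * c"
    by (simp add: mat_mult_def right_diff_distrib sum_subtractf sum_distrib_right mult.assoc)
  with assms show ?thesis by (simp add: mat_mult_one_right_at)
qed

lemma mat_commute_sub_central:
  fixes X V :: "'i \<Rightarrow> 'i \<Rightarrow> 'b::ring_1"
  assumes "finite I" and central: "\<And>y. c * y = y * c" and "mat_commute I X V"
  shows "mat_commute I (\<lambda>p q. X p q - c * mat_one p q) V"
  unfolding mat_commute_def mat_eq_on_def
proof (intro ballI)
  fix p q assume "p \<in> I" "q \<in> I"
  then have "mat_mult I X V p q - c * V p q = mat_mult I V X p q - V p q * c"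
    using assms(3) central[of "V p q"] by (simp add: mat_commute_def mat_eq_on_def)
  with \<open>p \<in> I\<close> \<open>q \<in> I\<close> show "mat_mult I (\<lambda>p q. X p q - c * mat_one p q) V p q
      = mat_mult I V (\<lambda>p q. X p q - c * mat_one p q) p q"
    by (simp add: mat_mult_sub_scalar_left[OF assms(1)] mat_mult_sub_scalar_right[OF assms(1)])
qed

section \<open>Linear functionals vanishing on a common kernel\<close>

lemma sum_mult_eliminate:
  fixes g h x :: "'i \<Rightarrow> 'a::field"
  assumes "finite I" "r0 \<in> I"
  shows "(\<Sum>r\<in>I. (g r - g r0 / h r0 * h r) * x r)
       = (\<Sum>r\<in>I. g r * (x r - (if r = r0 then (\<Sum>s\<in>I. h s * x s) / h r0 else 0)))"
proof -
  let ?c = "(\<Sum>s\<in>I. h s * x s) / h r0"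
  have "(\<Sum>r\<in>I. g r * (x r - (if r = r0 then ?c else 0))) = (\<Sum>r\<in>I. g r * x r) - g r0 * ?c"
    using assms by (simp add: right_diff_distrib sum_subtractf if_distrib[of "(*) _"] cong: if_cong)
  moreover have "(\<Sum>r\<in>I. (g r - g r0 / h r0 * h r) * x r)
      = (\<Sum>r\<in>I. g r * x r) - g r0 / h r0 * (\<Sum>r\<in>I. h r * x r)"
    by (simp add: left_diff_distrib sum_subtractf sum_distrib_left mult.assoc)
  ultimately show ?thesis by simp
qed

lemma lincomb_if_vanishes_on_common_kernel:
  fixes f :: "'i \<Rightarrow> 'a::field" and g :: "'k \<Rightarrow> 'i \<Rightarrow> 'a"
  assumes "finite I" "finite K"
    and "\<And>x. \<forall>k\<in>K. (\<Sum>r\<in>I. g k r * x r) = 0 \<Longrightarrow> (\<Sum>r\<in>I. f r * x r) = 0"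
  shows "\<exists>c. \<forall>r\<in>I. f r = (\<Sum>k\<in>K. c k * g k r)"
  using assms(2,3)
proof (induction K arbitrary: f g rule: finite_induct)
  case empty
  have "f r0 = 0" if "r0 \<in> I" for r0
    using empty[of "\<lambda>r. if r = r0 then 1 else 0"] that assms(1)
    by (simp add: if_distrib cong: if_cong)
  then show ?case by simp
next
  case (insert k0 K)
  show ?case
  proof (cases "\<forall>r\<in>I. g k0 r = 0")
    case True
    then obtain c where "\<forall>r\<in>I. f r = (\<Sum>k\<in>K. c k * g k r)"
      using insert.IH[of g f] insert.prems by auto
    then have "\<forall>r\<in>I. f r = (\<Sum>k\<in>insert k0 K. (c(k0 := 0)) k * g k r)"
      using insert.hyps by (auto intro!: sum.cong)
    then show ?thesis by blast
  next
    case False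
    then obtain r0 where r0: "r0 \<in> I" "g k0 r0 \<noteq> 0" by blast
    let ?e = "\<lambda>w r. w r - w r0 / g k0 r0 * g k0 r"
    have "\<exists>c. \<forall>r\<in>I. ?e f r = (\<Sum>k\<in>K. c k * ?e (g k) r)"
    proof (rule insert.IH)
      fix x assume x: "\<forall>k\<in>K. (\<Sum>r\<in>I. ?e (g k) r * x r) = 0"
      \<comment> \<open>correct x at the pivot r0 so that the pivot functional g k0 vanishes\<close>
      define y where "y r = x r - (if r = r0 then (\<Sum>s\<in>I. g k0 s * x s) / g k0 r0 else 0)" for r
      have "(\<Sum>r\<in>I. g k0 r * y r) = 0"
        using r0 assms(1)
        by (simp add: y_def right_diff_distrib sum_subtractf if_distrib[of "(*) _"] cong: if_cong)
      moreover have "\<forall>k\<in>K. (\<Sum>r\<in>I. g k r * y r) = 0"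
        using x unfolding y_def sum_mult_eliminate[OF assms(1) r0(1)] .
      ultimately have "(\<Sum>r\<in>I. f r * y r) = 0"
        using insert.prems by blast
      then show "(\<Sum>r\<in>I. ?e f r * x r) = 0"
        unfolding y_def sum_mult_eliminate[OF assms(1) r0(1)] .
    qed
    then obtain c where c: "\<forall>r\<in>I. ?e f r = (\<Sum>k\<in>K. c k * ?e (g k) r)" ..
    define c' where "c' = c(k0 := (f r0 - (\<Sum>k\<in>K. c k * g k r0)) / g k0 r0)"
    have "f r = (\<Sum>k\<in>insert k0 K. c' k * g k r)" if r: "r \<in> I" for r
    proof -
      let ?S = "\<Sum>k\<in>K. c k * g k r" and ?T = "\<Sum>k\<in>K. c k * g k r0"
      have E: "(\<Sum>k\<in>K. c k * ?e (g k) r) = ?S - ?T / g k0 r0 * g k0 r"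
        by (simp add: right_diff_distrib sum_subtractf sum_divide_distrib sum_distrib_right
            mult.assoc)
      from c r have "f r = (\<Sum>k\<in>K. c k * ?e (g k) r) + f r0 / g k0 r0 * g k0 r"
        by (simp add: diff_eq_eq)
      also have "\<dots> = ?S + (f r0 - ?T) / g k0 r0 * g k0 r"
        unfolding E by (simp add: diff_divide_distrib algebra_simps)
      finally have "f r = ?S + (f r0 - ?T) / g k0 r0 * g k0 r" .
      moreover have "(\<Sum>k\<in>K. c' k * g k r) = ?S"
        using insert.hyps by (intro sum.cong) (auto simp: c'_def)
      ultimately show ?thesis
        using insert.hyps by (simp add: c'_def)
    qed
    then show ?thesis by blast
  qed
qed

section \<open>Finite quantum sets and eigenprojections\<close>

lemma finite_qcar: "finite (qcar ns)"
proof -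
  have "qcar ns \<subseteq> {..<length ns} \<times> {..<sum_list ns + 1} \<times> {..<sum_list ns + 1}"
    using elem_le_sum_list[of _ ns] by (fastforce simp: qcar_def)
  then show ?thesis by (rule finite_subset) auto
qed

lemma nsz_pos: "p \<in> qcar ns \<Longrightarrow> 0 < nsz ns p"
  by (auto simp: qcar_def nsz_def)

lemma qmult_at: "(i,j,k) \<in> qcar ns \<Longrightarrow> qmult ns x y (i,j,k) = (\<Sum>l<ns ! i. x (i,j,l) * y (i,l,k))"
  by (simp add: qmult_def)

lemma qmult_expand_left:
  assumes t: "t \<in> qcar ns"
  shows "(\<Sum>s\<in>qcar ns. a s * qmult ns (qbasis s) y t) = qmult ns a (y :: qidx \<Rightarrow> complex) t"
proof -
  obtain i j k where t_eq: "t = (i,j,k)" by (cases t) auto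
  with t have "(i,j,k) \<in> qcar ns" by simp
  have delta: "u * ((if b then 1 else 0) * v) = (if b then u * v else 0)" for b and u v :: complex
    by simp
  from \<open>(i,j,k) \<in> qcar ns\<close> have "(\<Sum>s\<in>qcar ns. a s * qmult ns (qbasis s) y t)
      = (\<Sum>l<ns ! i. \<Sum>s\<in>qcar ns. (if (i,j,l) = s then a s * y (i,l,k) else 0))"
    by (simp add: t_eq qmult_at sum_distrib_left qbasis_def delta) (rule sum.swap)
  also have "\<dots> = (\<Sum>l<ns ! i. a (i,j,l) * y (i,l,k))"
    using \<open>(i,j,k) \<in> qcar ns\<close> finite_qcar[of ns] by (intro sum.cong) (auto simp: qcar_def)
  finally show ?thesis using \<open>(i,j,k) \<in> qcar ns\<close> by (simp add: t_eq qmult_at)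
qed

lemma eigenprojection_annihilated:
  assumes "is_orth_proj ns P (eigenspace ns D lam)"
  shows "mat_eq_on (qcar ns) (mat_mult (qcar ns) (\<lambda>p q. D p q - lam * mat_one p q) P) (\<lambda>_ _. 0)"
  unfolding mat_eq_on_def
proof (intro ballI)
  fix p q assume p: "p \<in> qcar ns" and q: "q \<in> qcar ns"
  define x where "x = qapp ns P (qbasis q)"
  have "x \<in> eigenspace ns D lam"
    using assms by (auto simp: is_orth_proj_def x_def)
  then have "qapp ns D x p = lam * x p"
    by (simp add: eigenspace_def)
  moreover have "x r = P r q" if "r \<in> qcar ns" for r
    using that q finite_qcar
    by (simp add: x_def qapp_def qbasis_def if_distrib[of "(*) _"] cong: if_cong)
  ultimately have "mat_mult (qcar ns) D P p q = lam * P p q"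
    using p by (simp add: qapp_def mat_mult_def cong: sum.cong)
  then show "mat_mult (qcar ns) (\<lambda>p q. D p q - lam * mat_one p q) P p q = 0"
    using p by (simp add: mat_mult_sub_scalar_left[OF finite_qcar])
qed

lemma eigenprojection_fixes_eigenvector:
  assumes proj: "is_orth_proj ns P (eigenspace ns D lam)"
    and eigen: "\<forall>k\<in>qcar ns. (\<Sum>r\<in>qcar ns. D k r * x r) = lam * x k"
    and p: "p \<in> qcar ns"
  shows "(\<Sum>r\<in>qcar ns. P p r * x r) = x p"
proof -
  define x' where "x' r = (if r \<in> qcar ns then x r else 0)" for r
  have "qapp ns D x' = (\<lambda>k. lam * x' k)"
    using eigen by (auto simp: qapp_def x'_def cong: sum.cong)
  then have "x' \<in> range (qapp ns P)"
    using proj by (simp add: is_orth_proj_def eigenspace_def x'_def)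
  then obtain y where y: "x' = qapp ns P y" by blast
  have idem: "(\<Sum>r\<in>qcar ns. P p r * P r s) = P p s" if "s \<in> qcar ns" for s
    using proj p that by (simp add: is_orth_proj_def qop_eq_def qcomp_def)
  have x_eq: "x r = (\<Sum>s\<in>qcar ns. P r s * y s)" if "r \<in> qcar ns" for r
    using that fun_cong[OF y, of r] by (simp add: x'_def qapp_def)
  have "(\<Sum>r\<in>qcar ns. P p r * x r) = (\<Sum>r\<in>qcar ns. \<Sum>s\<in>qcar ns. P p r * (P r s * y s))"
    by (intro sum.cong) (simp_all add: x_eq sum_distrib_left)
  also have "\<dots> = (\<Sum>s\<in>qcar ns. (\<Sum>r\<in>qcar ns. P p r * P r s) * y s)"
    by (subst sum.swap) (simp add: sum_distrib_right mult.assoc)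
  also have "\<dots> = x p"
    using p by (simp add: idem x_eq cong: sum.cong)
  finally show ?thesis .
qed

lemma eigenprojection_factor:
  assumes "is_orth_proj ns P (eigenspace ns D lam)"
  shows "\<exists>M. mat_eq_on (qcar ns) (\<lambda>p q. P p q - mat_one p q)
            (mat_mult (qcar ns) M (\<lambda>p q. D p q - lam * mat_one p q))"
proof -
  have "\<exists>c. \<forall>q\<in>qcar ns. P p q - mat_one p q = (\<Sum>r\<in>qcar ns. c r * (D r q - lam * mat_one r q))"
    if p: "p \<in> qcar ns" for p
  proof (rule lincomb_if_vanishes_on_common_kernel[OF finite_qcar finite_qcar])
    fix x assume "\<forall>k\<in>qcar ns. (\<Sum>r\<in>qcar ns. (D k r - lam * mat_one k r) * x r) = 0"
    then have "\<forall>k\<in>qcar ns. (\<Sum>r\<in>qcar ns. D k r * x r) = lam * x k"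
      by (simp add: left_diff_distrib sum_subtractf mult.assoc sum_mat_one_left[OF finite_qcar]
          flip: sum_distrib_left)
    then have "(\<Sum>r\<in>qcar ns. P p r * x r) = x p"
      using eigenprojection_fixes_eigenvector[OF assms _ p] by blast
    then show "(\<Sum>r\<in>qcar ns. (P p r - mat_one p r) * x r) = 0"
      using p by (simp add: left_diff_distrib sum_subtractf sum_mat_one_left[OF finite_qcar])
  qed
  then have "\<exists>M. \<forall>p\<in>qcar ns. \<forall>q\<in>qcar ns.
      P p q - mat_one p q = (\<Sum>r\<in>qcar ns. M p r * (D r q - lam * mat_one r q))"
    by (intro bchoice ballI)
  then show ?thesis
    by (simp add: mat_eq_on_def mat_mult_def)
qed

section \<open>Operators with coefficients in a *-algebra\<close>

text \<open>ampl sc T is T \<otimes> 1, and qadjB is the adjoint of B(l^2(X)) \<otimes> B, the operator Us of qut_rel.\<close>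

definition ampl :: "(complex \<Rightarrow> 'b) \<Rightarrow> ('i \<Rightarrow> 'i \<Rightarrow> complex) \<Rightarrow> 'i \<Rightarrow> 'i \<Rightarrow> 'b" where
  "ampl sc T = (\<lambda>p q. sc (T p q))"

definition qadjB :: "nat list \<Rightarrow> (complex \<Rightarrow> 'b::ring_1) \<Rightarrow> ('b \<Rightarrow> 'b) \<Rightarrow> (qidx \<Rightarrow> qidx \<Rightarrow> 'b)
    \<Rightarrow> qidx \<Rightarrow> qidx \<Rightarrow> 'b" where
  "qadjB ns sc st X = (\<lambda>p q. sc (of_nat (nsz ns q) / of_nat (nsz ns p)) * st (X q p))"

definition mat_fixes ::
    "'i set \<Rightarrow> (complex \<Rightarrow> 'b::semiring_0) \<Rightarrow> ('i \<Rightarrow> 'i \<Rightarrow> 'b) \<Rightarrow> ('i \<Rightarrow> complex) \<Rightarrow> bool" where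
  "mat_fixes I sc U x \<longleftrightarrow> (\<forall>p\<in>I. (\<Sum>t\<in>I. U p t * sc (x t)) = sc (x p))"

text \<open>The relation m (U \<otimes> U) = U m, in the form used by qut_rel.\<close>

definition qmult_preserving :: "nat list \<Rightarrow> (complex \<Rightarrow> 'b::ring_1) \<Rightarrow> (qidx \<Rightarrow> qidx \<Rightarrow> 'b) \<Rightarrow> bool" where
  "qmult_preserving ns sc U \<longleftrightarrow> (\<forall>q\<in>qcar ns. \<forall>r\<in>qcar ns. \<forall>p\<in>qcar ns.
     qmult ns (qcol ns U q) (qcol ns U r) p
       = (\<Sum>t\<in>qcar ns. U p t * sc (qmult ns (qbasis q) (qbasis r) t)))"

definition qleft_mult :: "nat list \<Rightarrow> (qidx \<Rightarrow> complex) \<Rightarrow> qidx \<Rightarrow> qidx \<Rightarrow> complex" where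
  "qleft_mult ns a = (\<lambda>p q. qmult ns a (qbasis q) p)"

lemma degL_eq: "degL ns A = qleft_mult ns (qapp ns A (qunit ns))"
  by (simp add: degL_def qleft_mult_def)

lemma degR_eq: "degR ns A = qleft_mult ns (qapp ns (qadj ns A) (qunit ns))"
  by (simp add: degR_def qleft_mult_def)

lemma qintertwines_iff: "qintertwines ns sc U T \<longleftrightarrow> mat_commute (qcar ns) (ampl sc T) U"
  by (simp add: qintertwines_def mat_commute_def mat_eq_on_def mat_mult_def ampl_def)

lemma qut_rel_unitary:
  assumes "qut_rel ns A sc st U"
  shows "mat_eq_on (qcar ns) (mat_mult (qcar ns) U (qadjB ns sc st U)) mat_one"
    and "mat_eq_on (qcar ns) (mat_mult (qcar ns) (qadjB ns sc st U) U) mat_one"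
  using assms by (simp_all add: qut_rel_def mat_eq_on_def mat_mult_def mat_one_def qadjB_def)

lemma qut_rel_qmult_preserving: "qut_rel ns A sc st U \<Longrightarrow> qmult_preserving ns sc U"
  by (simp add: qut_rel_def qmult_preserving_def)

lemma qut_rel_fixes_unit: "qut_rel ns A sc st U \<Longrightarrow> mat_fixes (qcar ns) sc U (qunit ns)"
  by (simp add: qut_rel_def mat_fixes_def)

lemma qut_rel_commute: "qut_rel ns A sc st U \<Longrightarrow> mat_commute (qcar ns) (ampl sc A) U"
  by (simp add: qut_rel_def mat_commute_def mat_eq_on_def mat_mult_def ampl_def)

locale complex_star_algebra =
  fixes sc :: "complex \<Rightarrow> 'b::ring_1" and st :: "'b \<Rightarrow> 'b"
  assumes star_algebra: "star_algebra sc st"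
begin

lemma sc_add: "sc (a + b) = sc a + sc b"
  using star_algebra unfolding star_algebra_def by blast

lemma sc_mult: "sc (a * b) = sc a * sc b"
  using star_algebra unfolding star_algebra_def by blast

lemma sc_one [simp]: "sc 1 = 1"
  using star_algebra unfolding star_algebra_def by blast

lemma sc_central: "sc a * x = x * sc a"
  using star_algebra unfolding star_algebra_def by blast

lemma st_add: "st (x + y) = st x + st y"
  using star_algebra unfolding star_algebra_def by blast

lemma st_mult: "st (x * y) = st y * st x"
  using star_algebra unfolding star_algebra_def by blast

lemma st_st [simp]: "st (st x) = x"
  using star_algebra unfolding star_algebra_def by blast

lemma st_sc_mult: "st (sc a * x) = sc (cnj a) * st x"
  using star_algebra unfolding star_algebra_def by blast

lemma sc_zero [simp]: "sc 0 = 0"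
  using sc_add[of 0 0] by simp

lemma sc_diff: "sc (a - b) = sc a - sc b"
  using sc_add[of "a - b" b] by (simp add: eq_diff_eq)

lemma sc_sum: "sc (sum f S) = (\<Sum>x\<in>S. sc (f x))"
  by (induction S rule: infinite_finite_induct) (simp_all add: sc_add)

lemma st_zero: "st 0 = 0"
  using st_add[of 0 0] by simp

lemma st_sum: "st (sum f S) = (\<Sum>x\<in>S. st (f x))"
  by (induction S rule: infinite_finite_induct) (simp_all add: st_zero st_add)

lemma st_one: "st 1 = 1"
proof -
  have "st 1 = st 1 * st (st 1)" by simp
  also have "\<dots> = st (st 1 * 1)" by (rule st_mult[symmetric])
  finally show ?thesis by simp
qed

lemma st_sc: "st (sc a) = sc (cnj a)"
  using st_sc_mult[of a 1] by (simp add: st_one)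

lemma sc_of_bool [simp]: "sc (of_bool b) = of_bool b"
  by (cases b) simp_all

lemma sc_mult_central: "sc a * x * (sc b * y) = sc (a * b) * (x * y)"
proof -
  have "sc a * x * (sc b * y) = sc a * (x * sc b) * y" by (simp add: mult.assoc)
  also have "x * sc b = sc b * x" by (rule sc_central[symmetric])
  also have "sc a * (sc b * x) * y = sc (a * b) * (x * y)" by (simp add: sc_mult mult.assoc)
  finally show ?thesis .
qed

lemma ampl_mult: "mat_mult I (ampl sc T) (ampl sc S) = ampl sc (mat_mult I T S)"
  by (simp add: mat_mult_def ampl_def sc_sum sc_mult)

lemma ampl_sub_scalar:
  "ampl sc (\<lambda>p q. D p q - c * mat_one p q) = (\<lambda>p q. ampl sc D p q - sc c * mat_one p q)"
  by (simp add: ampl_def sc_diff sc_mult mat_one_def)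

lemma ampl_cong: "mat_eq_on I T S \<Longrightarrow> mat_eq_on I (ampl sc T) (ampl sc S)"
  by (simp add: mat_eq_on_def ampl_def)

lemma ampl_zero [simp]: "ampl sc (\<lambda>_ _. 0) = (\<lambda>_ _. 0)"
  by (simp add: ampl_def)

lemma qadjB_mult:
  "mat_eq_on (qcar ns) (qadjB ns sc st (mat_mult (qcar ns) X Y))
     (mat_mult (qcar ns) (qadjB ns sc st Y) (qadjB ns sc st X))"
  unfolding mat_eq_on_def
proof (intro ballI)
  fix p q assume "p \<in> qcar ns" "q \<in> qcar ns"
  let ?w = "\<lambda>p q. of_nat (nsz ns q) / of_nat (nsz ns p) :: complex"
  have "sc (?w p q) * (st (Y r p) * st (X q r))
      = sc (?w p r) * st (Y r p) * (sc (?w r q) * st (X q r))"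
    if "r \<in> qcar ns" for r
  proof -
    have "?w p r * ?w r q = ?w p q"
      using nsz_pos[OF that] by simp
    then show ?thesis by (simp add: sc_mult_central)
  qed
  then show "qadjB ns sc st (mat_mult (qcar ns) X Y) p q
      = mat_mult (qcar ns) (qadjB ns sc st Y) (qadjB ns sc st X) p q"
    by (simp add: qadjB_def mat_mult_def st_sum st_mult sum_distrib_left mult.assoc cong: sum.cong)
qed

lemma qadjB_qadjB: "mat_eq_on (qcar ns) (qadjB ns sc st (qadjB ns sc st X)) X"
  unfolding mat_eq_on_def
proof (intro ballI)
  fix p q assume "p \<in> qcar ns" "q \<in> qcar ns"
  let ?w = "\<lambda>p q. of_nat (nsz ns q) / of_nat (nsz ns p) :: complex"
  have "qadjB ns sc st (qadjB ns sc st X) p q = sc (?w p q) * (sc (?w q p) * X p q)"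
    by (simp add: qadjB_def st_sc_mult)
  also have "\<dots> = sc (?w p q * ?w q p) * X p q"
    by (simp only: sc_mult mult.assoc)
  also have "?w p q * ?w q p = 1"
    using nsz_pos[OF \<open>p \<in> qcar ns\<close>] nsz_pos[OF \<open>q \<in> qcar ns\<close>] by simp
  finally show "qadjB ns sc st (qadjB ns sc st X) p q = X p q"
    by simp
qed

lemma qadjB_ampl: "qadjB ns sc st (ampl sc T) = ampl sc (qadj ns T)"
  by (simp add: fun_eq_iff qadjB_def ampl_def qadj_def st_sc flip: sc_mult)

lemma qadjB_cong:
  "mat_eq_on (qcar ns) X Y \<Longrightarrow> mat_eq_on (qcar ns) (qadjB ns sc st X) (qadjB ns sc st Y)"
  by (simp add: mat_eq_on_def qadjB_def)

lemma mat_commute_qadjB: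
  assumes "mat_commute (qcar ns) X V"
  shows "mat_commute (qcar ns) (qadjB ns sc st X) (qadjB ns sc st V)"
proof -
  have "mat_eq_on (qcar ns) (mat_mult (qcar ns) (qadjB ns sc st X) (qadjB ns sc st V))
      (qadjB ns sc st (mat_mult (qcar ns) V X))"
    by (rule mat_eq_on_sym[OF qadjB_mult])
  also have "mat_eq_on (qcar ns) \<dots> (qadjB ns sc st (mat_mult (qcar ns) X V))"
    using assms unfolding mat_commute_def by (rule qadjB_cong[OF mat_eq_on_sym])
  also have "mat_eq_on (qcar ns) \<dots> (mat_mult (qcar ns) (qadjB ns sc st V) (qadjB ns sc st X))"
    by (rule qadjB_mult)
  finally show ?thesis by (simp add: mat_commute_def)
qed

lemma mat_fixes_qapp:
  assumes comm: "mat_commute (qcar ns) (ampl sc T) U" and fixed: "mat_fixes (qcar ns) sc U x"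
  shows "mat_fixes (qcar ns) sc U (qapp ns T x)"
  unfolding mat_fixes_def
proof
  fix p assume p: "p \<in> qcar ns"
  have "(\<Sum>t\<in>qcar ns. U p t * sc (qapp ns T x t))
      = (\<Sum>t\<in>qcar ns. \<Sum>r\<in>qcar ns. U p t * sc (T t r) * sc (x r))"
    by (intro sum.cong refl) (simp add: qapp_def sc_sum sc_mult sum_distrib_left mult.assoc)
  also have "\<dots> = (\<Sum>r\<in>qcar ns. mat_mult (qcar ns) U (ampl sc T) p r * sc (x r))"
    by (subst sum.swap) (simp add: mat_mult_def ampl_def sum_distrib_right)
  also have "\<dots> = (\<Sum>r\<in>qcar ns. mat_mult (qcar ns) (ampl sc T) U p r * sc (x r))"
    using comm p by (intro sum.cong) (auto simp: mat_commute_def mat_eq_on_def)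
  also have "\<dots> = (\<Sum>r\<in>qcar ns. \<Sum>t\<in>qcar ns. sc (T p t) * U t r * sc (x r))"
    by (simp add: mat_mult_def ampl_def sum_distrib_right)
  also have "\<dots> = (\<Sum>t\<in>qcar ns. sc (T p t) * (\<Sum>r\<in>qcar ns. U t r * sc (x r)))"
    by (subst sum.swap) (simp add: sum_distrib_left mult.assoc)
  also have "\<dots> = sc (qapp ns T x p)"
    using fixed p by (simp add: mat_fixes_def qapp_def sc_sum sc_mult)
  finally show "(\<Sum>t\<in>qcar ns. U p t * sc (qapp ns T x t)) = sc (qapp ns T x p)" .
qed

lemma sc_qbasis: "sc (qbasis r x) = (if x = r then 1 else 0)"
  by (simp add: qbasis_def)

lemma mat_mult_ampl_qleft_mult:
  assumes ijk: "(i,j,k) \<in> qcar ns"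
  shows "mat_mult (qcar ns) (ampl sc (qleft_mult ns a)) U (i,j,k) q
       = (\<Sum>l<ns ! i. sc (a (i,j,l)) * U (i,l,k) q)"
proof -
  have "mat_mult (qcar ns) (ampl sc (qleft_mult ns a)) U (i,j,k) q
      = (\<Sum>r\<in>qcar ns. \<Sum>l<ns ! i. if (i,l,k) = r then sc (a (i,j,l)) * U r q else 0)"
    using ijk by (simp add: mat_mult_def ampl_def qleft_mult_def qmult_at sc_sum sc_mult sc_qbasis
        sum_distrib_right if_distrib[of "\<lambda>u. _ * u * _"] cong: if_cong)
  also have "\<dots> = (\<Sum>l<ns ! i. sc (a (i,j,l)) * U (i,l,k) q)"
    using ijk finite_qcar[of ns] by (subst sum.swap) (intro sum.cong refl, simp add: qcar_def)
  finally show ?thesis .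
qed

lemma qleft_mult_commute:
  assumes mult: "qmult_preserving ns sc U" and fixed: "mat_fixes (qcar ns) sc U a"
  shows "mat_commute (qcar ns) (ampl sc (qleft_mult ns a)) U"
  unfolding mat_commute_def mat_eq_on_def
proof (intro ballI)
  fix p q assume p: "p \<in> qcar ns" and q: "q \<in> qcar ns"
  obtain i j k where p_eq: "p = (i,j,k)" by (cases p) auto
  with p have ijk: "(i,j,k) \<in> qcar ns" by simp
  have "U p t * sc (qmult ns a (qbasis q) t)
      = (\<Sum>s\<in>qcar ns. U p t * sc (qmult ns (qbasis s) (qbasis q) t) * sc (a s))"
    if "t \<in> qcar ns" for t
  proof -
    have "qmult ns a (qbasis q) t = (\<Sum>s\<in>qcar ns. qmult ns (qbasis s) (qbasis q) t * a s)"
      using qmult_expand_left[OF that, of a "qbasis q"] by (simp add: mult.commute)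
    then show ?thesis by (simp add: sc_sum sc_mult sum_distrib_left mult.assoc)
  qed
  then have "mat_mult (qcar ns) U (ampl sc (qleft_mult ns a)) p q
      = (\<Sum>t\<in>qcar ns. \<Sum>s\<in>qcar ns. U p t * sc (qmult ns (qbasis s) (qbasis q) t) * sc (a s))"
    by (simp add: mat_mult_def ampl_def qleft_mult_def cong: sum.cong)
  also have "\<dots> = (\<Sum>s\<in>qcar ns. qmult ns (qcol ns U s) (qcol ns U q) p * sc (a s))"
    using mult p q by (subst sum.swap) (simp add: qmult_preserving_def sum_distrib_right)
  also have "\<dots> = (\<Sum>s\<in>qcar ns. \<Sum>l<ns ! i. U (i,j,l) s * sc (a s) * U (i,l,k) q)"
  proof (intro sum.cong refl)
    fix s assume "s \<in> qcar ns"
    have "U (i,j,l) s * U (i,l,k) q * sc (a s) = U (i,j,l) s * sc (a s) * U (i,l,k) q" for l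
      by (simp add: mult.assoc sc_central)
    then show "qmult ns (qcol ns U s) (qcol ns U q) p * sc (a s)
        = (\<Sum>l<ns ! i. U (i,j,l) s * sc (a s) * U (i,l,k) q)"
      using ijk \<open>s \<in> qcar ns\<close> q by (simp add: p_eq qmult_at qcol_def qcar_def sum_distrib_right)
  qed
  also have "\<dots> = (\<Sum>l<ns ! i. (\<Sum>s\<in>qcar ns. U (i,j,l) s * sc (a s)) * U (i,l,k) q)"
    by (subst sum.swap) (simp add: sum_distrib_right)
  also have "\<dots> = (\<Sum>l<ns ! i. sc (a (i,j,l)) * U (i,l,k) q)"
    using fixed ijk by (intro sum.cong refl) (simp add: mat_fixes_def qcar_def)
  also have "\<dots> = mat_mult (qcar ns) (ampl sc (qleft_mult ns a)) U p q"
    using ijk by (simp add: p_eq mat_mult_ampl_qleft_mult)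
  finally show "mat_mult (qcar ns) (ampl sc (qleft_mult ns a)) U p q
      = mat_mult (qcar ns) U (ampl sc (qleft_mult ns a)) p q" by simp
qed

lemma mat_commute_range_invariant:
  assumes I: "finite I"
    and factor: "mat_eq_on I (\<lambda>p q. P p q - mat_one p q) (mat_mult I M N)"
    and annihilated: "mat_eq_on I (mat_mult I N P) (\<lambda>_ _. 0)"
    and comm: "mat_commute I (ampl sc N) V"
  shows "mat_eq_on I (mat_mult I V (ampl sc P)) (mat_mult I (ampl sc P) (mat_mult I V (ampl sc P)))"
proof -
  let ?X = "mat_mult I V (ampl sc P)"
  have "mat_eq_on I (mat_mult I (ampl sc N) ?X) (mat_mult I (mat_mult I V (ampl sc N)) (ampl sc P))"
    using comm unfolding mat_commute_def mat_mult_assoc[OF I, symmetric]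
    by (rule mat_mult_cong[OF _ mat_eq_on_refl])
  also have "\<dots> = mat_mult I V (ampl sc (mat_mult I N P))"
    by (simp add: mat_mult_assoc[OF I] ampl_mult)
  also have "mat_eq_on I \<dots> (\<lambda>_ _. 0)"
    using mat_mult_cong[OF mat_eq_on_refl ampl_cong[OF annihilated]] by simp
  finally have NX: "mat_eq_on I (mat_mult I (ampl sc N) ?X) (\<lambda>_ _. 0)" .
  have "mat_eq_on I (mat_mult I (ampl sc (\<lambda>p q. P p q - mat_one p q)) ?X)
      (mat_mult I (ampl sc (mat_mult I M N)) ?X)"
    using factor by (intro mat_mult_cong ampl_cong) simp_all
  also have "\<dots> = mat_mult I (ampl sc M) (mat_mult I (ampl sc N) ?X)"
    by (simp add: mat_mult_assoc[OF I] flip: ampl_mult)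
  also have "mat_eq_on I \<dots> (\<lambda>_ _. 0)"
    using mat_mult_cong[OF mat_eq_on_refl NX] by simp
  finally have QX: "mat_eq_on I (mat_mult I (ampl sc (\<lambda>p q. P p q - mat_one p q)) ?X) (\<lambda>_ _. 0)" .
  have "mat_mult I (ampl sc (\<lambda>p q. P p q - mat_one p q)) ?X p q
      = mat_mult I (ampl sc P) ?X p q - ?X p q"
    if "p \<in> I" for p q
    using mat_mult_sub_scalar_left[OF I that, of "ampl sc P" 1 ?X q]
    by (simp add: ampl_def sc_diff mat_one_def)
  with QX show ?thesis
    by (simp add: mat_eq_on_def)
qed

lemma unitary_projection_commute:
  assumes unitary: "mat_eq_on (qcar ns) (mat_mult (qcar ns) U (qadjB ns sc st U)) mat_one"
      "mat_eq_on (qcar ns) (mat_mult (qcar ns) (qadjB ns sc st U) U) mat_one"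
    and selfadj: "qop_eq ns (qadj ns P) P"
    and factor: "mat_eq_on (qcar ns) (\<lambda>p q. P p q - mat_one p q) (mat_mult (qcar ns) M N)"
    and annihilated: "mat_eq_on (qcar ns) (mat_mult (qcar ns) N P) (\<lambda>_ _. 0)"
    and comm: "mat_commute (qcar ns) (ampl sc N) U"
  shows "mat_commute (qcar ns) (ampl sc P) U"
proof -
  let ?I = "qcar ns" and ?P = "ampl sc P" and ?W = "qadjB ns sc st U"
  have "mat_commute ?I (ampl sc N) ?W"
    using finite_qcar unitary comm by (rule mat_commute_inverse)
  then have W_inv: "mat_eq_on ?I (mat_mult ?I ?W ?P) (mat_mult ?I ?P (mat_mult ?I ?W ?P))"
    using finite_qcar factor annihilated by (intro mat_commute_range_invariant)
  have U_inv: "mat_eq_on ?I (mat_mult ?I U ?P) (mat_mult ?I ?P (mat_mult ?I U ?P))"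
    using finite_qcar factor annihilated comm by (rule mat_commute_range_invariant)
  have P_adj: "mat_eq_on ?I (qadjB ns sc st ?P) ?P"
    unfolding qadjB_ampl using selfadj by (simp add: ampl_def qop_eq_def mat_eq_on_def)
  have adj_WP: "mat_eq_on ?I (qadjB ns sc st (mat_mult ?I ?W ?P)) (mat_mult ?I ?P U)"
    by (rule mat_eq_on_trans[OF qadjB_mult mat_mult_cong[OF P_adj qadjB_qadjB]])
  have "mat_eq_on ?I (mat_mult ?I ?P U) (qadjB ns sc st (mat_mult ?I ?W ?P))"
    by (rule mat_eq_on_sym[OF adj_WP])
  also have "mat_eq_on ?I \<dots> (qadjB ns sc st (mat_mult ?I ?P (mat_mult ?I ?W ?P)))"
    by (rule qadjB_cong[OF W_inv])
  also have "mat_eq_on ?I \<dots> (mat_mult ?I (mat_mult ?I ?P U) ?P)"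
    by (rule mat_eq_on_trans[OF qadjB_mult mat_mult_cong[OF adj_WP P_adj]])
  also have "mat_eq_on ?I \<dots> (mat_mult ?I U ?P)"
    using mat_eq_on_sym[OF U_inv] by (simp add: mat_mult_assoc[OF finite_qcar])
  finally show ?thesis by (simp add: mat_commute_def)
qed

lemma qut_rel_degree_commute:
  assumes rel: "qut_rel ns A sc st U" and D: "D = degL ns A \<or> D = degR ns A"
  shows "mat_commute (qcar ns) (ampl sc D) U"
proof -
  have left_mult: "mat_commute (qcar ns) (ampl sc (qleft_mult ns (qapp ns T (qunit ns)))) U"
    if "mat_commute (qcar ns) (ampl sc T) U" for T
    using qut_rel_qmult_preserving[OF rel] mat_fixes_qapp[OF that qut_rel_fixes_unit[OF rel]]
    by (rule qleft_mult_commute)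
  have "mat_commute (qcar ns) (ampl sc (qadj ns A)) (qadjB ns sc st U)"
    using mat_commute_qadjB[OF qut_rel_commute[OF rel]] by (simp add: qadjB_ampl)
  then have "mat_commute (qcar ns) (ampl sc (qadj ns A)) U"
    by (rule mat_commute_inverse[OF finite_qcar qut_rel_unitary(2,1)[OF rel]])
  with D show ?thesis
    using left_mult qut_rel_commute[OF rel] by (auto simp: degL_eq degR_eq)
qed

end

theorem proposition2p5:
  fixes ns :: "nat list" and A D P :: "qidx \<Rightarrow> qidx \<Rightarrow> complex" and lam :: complex
    and sc :: "complex \<Rightarrow> 'b::ring_1" and st :: "'b \<Rightarrow> 'b" and U :: "qidx \<Rightarrow> qidx \<Rightarrow> 'b"
  assumes "quantum_graph ns A"
    and "D = degL ns A \<or> D = degR ns A"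
    and "eigenspace ns D lam \<noteq> {\<lambda>_. 0}"
    and "is_orth_proj ns P (eigenspace ns D lam)"
    and "star_algebra sc st"
    and "qut_rel ns A sc st U"
  shows "qintertwines ns sc U P"
proof -
  interpret complex_star_algebra sc st by unfold_locales fact
  let ?N = "\<lambda>p q. D p q - lam * mat_one p q"
  have "mat_commute (qcar ns) (ampl sc D) U"
    using assms(6,2) by (rule qut_rel_degree_commute)
  then have "mat_commute (qcar ns) (ampl sc ?N) U"
    unfolding ampl_sub_scalar by (rule mat_commute_sub_central[OF finite_qcar sc_central])
  moreover obtain M
    where "mat_eq_on (qcar ns) (\<lambda>p q. P p q - mat_one p q) (mat_mult (qcar ns) M ?N)"
    using eigenprojection_factor[OF assms(4)] by blast
  moreover have "qop_eq ns (qadj ns P) P"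
    using assms(4) by (simp add: is_orth_proj_def)
  ultimately have "mat_commute (qcar ns) (ampl sc P) U"
    using qut_rel_unitary[OF assms(6)] eigenprojection_annihilated[OF assms(4)]
    by (blast intro: unitary_projection_commute)
  then show ?thesis by (simp add: qintertwines_iff)
qed

end
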